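(* Let $D\in\mathbb{N}_+$, $T\in\mathbb{N}$, and let $\mathcal{D}:\mathbb{R}^{D+T}\times\mathbb{R}^{D+T}\to[0,\infty)$ admit a neural (quasi-)metric representation (so $\mathcal{D}(x,y)$ depends only on $x_{1:D},y_{1:D}$). Then: (a) $\mathcal{D}$, viewed as a function of the spatial coordinates $(x_{1:D},y_{1:D})\in\mathbb{R}^D\times\mathbb{R}^D$, is a quasi-metric on $\mathbb{R}^D$; (b) if each $\mathsf{W}_j$ in the representation is orthogonal and $0<s_j,l_j\le1$ for all $j$, then it is a metric on $\mathbb{R}^D$; (c) if $T\in\mathbb{N}_+$, then $\mathcal{D}$ is a pseudo-quasi-metric on $\mathbb{R}^{D+T}$.
   Context: For $s,l>0$ define $\sigma_{s,l}:\mathbb{R}\to\mathbb{R}$ by $\sigma_{s,l}(x)=\operatorname{sgn}(x)|x|^s$ if $|x|<1$ and $\operatorname{sgn}(x)|x|^l$ if $|x|\ge1$ ($\operatorname{sgn}(x)=1$ for $x\ge0$, $-1$ otherwise); $\sigma\bullet$ is componentwise application. $I^+_D$ is the set of $D\times D$ matrices $\lambda I_D+|\tilde W|$ with $\lambda>0$, $\tilde W$ an arbitrary real $D\times D$ matrix, $|\cdot|$ entrywise absolute value. For $x\in\mathbb{R}^{D+T}$, $x_{1:D}$ denotes its first $D$ coordinates. $\mathcal{D}$ admits a neural (quasi-)metric representation if there are $J\in\mathbb{N}_+$, $s_0,l_0,\dots,s_J,l_J>0$, $\mathsf{W}_j\in I^+_D$ for $j<J$ and $\mathsf{W}_J\in(0,\infty)^{1\times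 D}$ such that $\mathcal{D}(x,y)=\mathsf{W}_J\sigma_{s_J,l_J}\bullet(u_{J-1})$, $u_j=\mathsf{W}_j\sigma_{s_j,l_j}\bullet(u_{j-1})$ for $j=1,\dots,J-1$, and $u_0=|\sigma_{s_0,l_0}\bullet(x_{1:D})-\sigma_{s_0,l_0}\bullet(y_{1:D})|$ (componentwise absolute value). A quasi-metric on a set $X$ is $d:X\times X\to[0,\infty)$ with $d(x,y)=0\iff x=y$, $d(x,y)=d(y,x)$, and $d(x,y)\le C(d(x,z)+d(z,y))$ for some constant $C\ge1$ and all $x,y,z$; it is a metric if $C=1$ works. A pseudo-quasi-metric satisfies the same except that $d(x,y)=0$ need not imply $x=y$ (but $d(x,x)=0$). *)

theory Defs
  imports Complex_Main
begin

text \<open>Points of R^m are represented as functions nat => real vanishing outside {0..<m}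
  (coordinate i of the paper is index i-1 here). Thus R^D is a subset of R^(D+T), and a point
  a of R^D is identified with (a,0) in R^(D+T); the first D coordinates of x are x restricted to {0..<D}.
  D x D matrices are functions nat => nat => real, only entries with indices < D matter.\<close>

definition Rn :: "nat \<Rightarrow> (nat \<Rightarrow> real) set" where
  "Rn m = {x. \<forall>i\<ge>m. x i = 0}"

definition sgn1 :: "real \<Rightarrow> real" where
  "sgn1 x = (if x \<ge> 0 then 1 else -1)"

definition sigma :: "real \<Rightarrow> real \<Rightarrow> real \<Rightarrow> real" where
  "sigma s l x = (if \<bar>x\<bar> < 1 then sgn1 x * \<bar>x\<bar> powr s else sgn1 x * \<bar>x\<bar> powr l)"

definition Iplus :: "nat \<Rightarrow> (nat \<Rightarrow> nat \<Rightarrow> real) \<Rightarrow> bool" where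
  "Iplus D M \<longleftrightarrow> (\<exists>lam::real. lam > 0 \<and> (\<exists>Wt :: nat \<Rightarrow> nat \<Rightarrow> real.
      \<forall>i<D. \<forall>k<D. M i k = lam * (if i = k then 1 else 0) + \<bar>Wt i k\<bar>))"

definition orthogonal_mat :: "nat \<Rightarrow> (nat \<Rightarrow> nat \<Rightarrow> real) \<Rightarrow> bool" where
  "orthogonal_mat D M \<longleftrightarrow> (\<forall>i<D. \<forall>k<D. (\<Sum>m<D. M i m * M k m) = (if i = k then 1 else 0))"

fun nn_layer :: "nat \<Rightarrow> (nat \<Rightarrow> real) \<Rightarrow> (nat \<Rightarrow> real) \<Rightarrow> (nat \<Rightarrow> nat \<Rightarrow> nat \<Rightarrow> real)
                  \<Rightarrow> (nat \<Rightarrow> real) \<Rightarrow> (nat \<Rightarrow> real) \<Rightarrow> nat \<Rightarrow> nat \<Rightarrow> real" where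
  "nn_layer D s l W x y 0 =
     (\<lambda>i. if i < D then \<bar>sigma (s 0) (l 0) (x i) - sigma (s 0) (l 0) (y i)\<bar> else 0)"
| "nn_layer D s l W x y (Suc j) =
     (\<lambda>i. if i < D then (\<Sum>k<D. W (Suc j) i k * sigma (s (Suc j)) (l (Suc j)) (nn_layer D s l W x y j k)) else 0)"

text \<open>Output W_J sigma_{s_J,l_J}(u_{J-1}), with W_J the row vector w.\<close>
definition neural_dist :: "nat \<Rightarrow> nat \<Rightarrow> (nat \<Rightarrow> real) \<Rightarrow> (nat \<Rightarrow> real) \<Rightarrow> (nat \<Rightarrow> nat \<Rightarrow> nat \<Rightarrow> real)
                  \<Rightarrow> (nat \<Rightarrow> real) \<Rightarrow> (nat \<Rightarrow> real) \<Rightarrow> (nat \<Rightarrow> real) \<Rightarrow> real" where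
  "neural_dist D J s l W w x y = (\<Sum>k<D. w k * sigma (s J) (l J) (nn_layer D s l W x y (J - 1) k))"

text \<open>The function Dist on R^(D+T) x R^(D+T) is given by the neural representation with
  depth J, exponents s_j,l_j (j = 0..J), matrices W_j in I^+_D (0 < j < J; W_0 does not occur
  in the formula) and positive row W_J = w.\<close>
definition neural_rep :: "nat \<Rightarrow> nat \<Rightarrow> ((nat \<Rightarrow> real) \<Rightarrow> (nat \<Rightarrow> real) \<Rightarrow> real) \<Rightarrow> nat
      \<Rightarrow> (nat \<Rightarrow> real) \<Rightarrow> (nat \<Rightarrow> real) \<Rightarrow> (nat \<Rightarrow> nat \<Rightarrow> nat \<Rightarrow> real) \<Rightarrow> (nat \<Rightarrow> real) \<Rightarrow> bool" where
  "neural_rep D T Dist J s l W w \<longleftrightarrow>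
     J \<ge> 1 \<and> (\<forall>j\<le>J. s j > 0 \<and> l j > 0) \<and> (\<forall>j. 0 < j \<and> j < J \<longrightarrow> Iplus D (W j)) \<and>
     (\<forall>k<D. w k > 0) \<and>
     (\<forall>x\<in>Rn (D + T). \<forall>y\<in>Rn (D + T). Dist x y = neural_dist D J s l W w x y)"

definition quasi_metric_on :: "'a set \<Rightarrow> ('a \<Rightarrow> 'a \<Rightarrow> real) \<Rightarrow> bool" where
  "quasi_metric_on X d \<longleftrightarrow>
     (\<forall>x\<in>X. \<forall>y\<in>X. d x y \<ge> 0 \<and> (d x y = 0 \<longleftrightarrow> x = y) \<and> d x y = d y x) \<and>
     (\<exists>C\<ge>1. \<forall>x\<in>X. \<forall>y\<in>X. \<forall>z\<in>X. d x y \<le> C * (d x z + d z y))"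

definition metric_on :: "'a set \<Rightarrow> ('a \<Rightarrow> 'a \<Rightarrow> real) \<Rightarrow> bool" where
  "metric_on X d \<longleftrightarrow>
     (\<forall>x\<in>X. \<forall>y\<in>X. d x y \<ge> 0 \<and> (d x y = 0 \<longleftrightarrow> x = y) \<and> d x y = d y x) \<and>
     (\<forall>x\<in>X. \<forall>y\<in>X. \<forall>z\<in>X. d x y \<le> d x z + d z y)"

definition pseudo_quasi_metric_on :: "'a set \<Rightarrow> ('a \<Rightarrow> 'a \<Rightarrow> real) \<Rightarrow> bool" where
  "pseudo_quasi_metric_on X d \<longleftrightarrow>
     (\<forall>x\<in>X. \<forall>y\<in>X. d x y \<ge> 0 \<and> d x x = 0 \<and> d x y = d y x) \<and>
     (\<exists>C\<ge>1. \<forall>x\<in>X. \<forall>y\<in>X. \<forall>z\<in>X. d x y \<le> C * (d x z + d z y))"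

end

theory Submission imports Defs begin

(* Matrices in I^+_D have nonnegative entries and positive diagonal, and sigma_{s,l} is an odd,
   strictly increasing function vanishing only at 0. Hence every layer u_j(x,y) is a nonnegative
   vector, symmetric in x and y, which vanishes exactly when x and y agree on the first D
   coordinates. The first layer satisfies the triangle inequality componentwise. Each later layer,
   and the output, inherits a quasi-triangle inequality from the previous layer, because
   t <= C (a + b) implies sigma(t) <= (2C)^max(s,l) (sigma(a) + sigma(b)). When s, l <= 1 the map
   t |-> sigma(t) / t is nonincreasing, so sigma is subadditive and the exact triangle inequality
   propagates instead. *)

lemma sigma_of_nonneg: "0 \<le> t \<Longrightarrow> sigma s l t = (if t < 1 then t powr s else t powr l)"
  by (simp add: sigma_def sgn1_def)

lemma sigma_zero [simp]: "sigma s l 0 = 0"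
  by (simp add: sigma_of_nonneg)

lemma sigma_minus: "sigma s l (- x) = - sigma s l x"
  by (cases x "0::real" rule: linorder_cases) (auto simp: sigma_def sgn1_def)

lemma sigma_nonneg: "0 \<le> t \<Longrightarrow> 0 \<le> sigma s l t"
  by (simp add: sigma_of_nonneg)

lemma sigma_pos: "0 < t \<Longrightarrow> 0 < sigma s l t"
  by (simp add: sigma_of_nonneg)

lemma sigma_strict_mono_nonneg:
  assumes "0 < s" "0 < l" "0 \<le> a" "a < b"
  shows "sigma s l a < sigma s l b"
proof (cases "b < 1")
  case True
  then show ?thesis using assms by (simp add: sigma_of_nonneg powr_less_mono2)
next
  case b: False
  show ?thesis
  proof (cases "a < 1")
    case True
    have "a powr s < 1" using assms True by (metis powr_less_mono2 powr_one_eq_one)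
    moreover have "1 \<le> b powr l" using b assms ge_one_powr_ge_zero by auto
    ultimately show ?thesis using True b assms by (simp add: sigma_of_nonneg)
  next
    case False
    then show ?thesis using assms b by (simp add: sigma_of_nonneg powr_less_mono2)
  qed
qed

lemma strict_mono_sigma:
  assumes "0 < s" "0 < l"
  shows "strict_mono (sigma s l)"
proof
  fix a b :: real assume "a < b"
  consider "0 \<le> a" | "b \<le> 0" | "a < 0" "0 < b" by linarith
  then show "sigma s l a < sigma s l b"
  proof cases
    case 1 show ?thesis by (rule sigma_strict_mono_nonneg[OF assms 1 \<open>a < b\<close>])
  next
    case 2
    then have "sigma s l (- b) < sigma s l (- a)"
      using assms \<open>a < b\<close> by (intro sigma_strict_mono_nonneg) auto
    then show ?thesis by (simp add: sigma_minus)
  next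
    case 3
    then show ?thesis using sigma_pos[of "- a" s l] sigma_pos[of b s l] by (simp add: sigma_minus)
  qed
qed

lemma sigma_eq_0_iff: "0 < s \<Longrightarrow> 0 < l \<Longrightarrow> sigma s l x = 0 \<longleftrightarrow> x = 0"
  using strict_mono_eq[OF strict_mono_sigma, of s l x 0] by simp

lemma sigma_mult_le:
  assumes "0 < s" "0 < l" "1 \<le> c" "0 \<le> t"
  shows "sigma s l (c * t) \<le> c powr max s l * sigma s l t"
proof (cases "t = 0")
  case False
  hence t: "0 < t" using assms by simp
  have cs: "c powr s \<le> c powr max s l" and cl: "c powr l \<le> c powr max s l"
    using assms powr_mono by auto
  consider "c * t < 1" | "1 \<le> t" | "t < 1" "1 \<le> c * t" by linarith
  then show ?thesis
  proof cases
    case 1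
    then have "t < 1" using assms t by (smt (verit) mult_le_cancel_right1)
    then show ?thesis using 1 assms t cs by (simp add: sigma_of_nonneg powr_mult mult_right_mono)
  next
    case 2
    then have "\<not> c * t < 1" using assms by (smt (verit) mult_le_cancel_right1)
    then show ?thesis using 2 assms t cl by (simp add: sigma_of_nonneg powr_mult mult_right_mono)
  next
    case 3
    have "(c * t) powr l \<le> c powr max s l * t powr s"
    proof (cases "l \<le> s")
      case True
      have "(c * t) powr l \<le> (c * t) powr s" using powr_mono True 3 by auto
      also have "\<dots> = c powr s * t powr s" using assms t by (simp add: powr_mult)
      also have "\<dots> \<le> c powr max s l * t powr s" using cs by (simp add: mult_right_mono)
      finally show ?thesis .
    next
      case False
      have "(c * t) powr l = c powr l * t powr l" using assms t by (simp add: powr_mult)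
      also have "\<dots> \<le> c powr l * t powr s" using powr_mono'[of s l t] False 3 t
        by (intro mult_left_mono) auto
      also have "\<dots> \<le> c powr max s l * t powr s" using cl by (simp add: mult_right_mono)
      finally show ?thesis .
    qed
    then show ?thesis using 3 assms by (simp add: sigma_of_nonneg)
  qed
qed simp

lemma sigma_quasi_subadditive:
  assumes "0 < s" "0 < l" "1 \<le> C" "0 \<le> a" "0 \<le> b" "t \<le> C * (a + b)"
  shows "sigma s l t \<le> (2 * C) powr max s l * (sigma s l a + sigma s l b)"
proof -
  have "C * (a + b) \<le> C * (2 * max a b)"
    using assms by (intro mult_left_mono) auto
  then have "sigma s l t \<le> sigma s l ((2 * C) * max a b)"
    using assms(6) strict_mono_less_eq[OF strict_mono_sigma[OF assms(1,2)]] by simp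
  also have "\<dots> \<le> (2 * C) powr max s l * sigma s l (max a b)"
    using assms by (intro sigma_mult_le) auto
  also have "\<dots> \<le> (2 * C) powr max s l * (sigma s l a + sigma s l b)"
    using sigma_nonneg[OF assms(4), of s l] sigma_nonneg[OF assms(5), of s l]
    by (intro mult_left_mono) (auto simp: max_def)
  finally show ?thesis .
qed

lemma sigma_div_self:
  "0 < t \<Longrightarrow> sigma s l t / t = (if t < 1 then t powr (s - 1) else t powr (l - 1))"
  by (simp add: sigma_of_nonneg powr_diff)

lemma sigma_div_self_antimono:
  assumes "s \<le> 1" "l \<le> 1" "0 < t" "t \<le> u"
  shows "sigma s l u / u \<le> sigma s l t / t"
proof -
  have u: "0 < u" using assms by simp
  consider "u < 1" | "1 \<le> t" | "t < 1" "1 \<le> u" by linarith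
  then show ?thesis
  proof cases
    case 1 then show ?thesis using assms u by (simp add: sigma_div_self powr_mono2')
  next
    case 2 then show ?thesis using assms u by (simp add: sigma_div_self powr_mono2')
  next
    case 3
    have "u powr (l - 1) \<le> 1" using assms 3
      by (metis diff_le_0_iff_le powr_mono2' powr_one_eq_one zero_less_one)
    moreover have "1 \<le> t powr (s - 1)" using assms 3
      by (metis diff_le_0_iff_le less_imp_le powr_mono2' powr_one_eq_one)
    ultimately show ?thesis using 3 assms u by (simp add: sigma_div_self)
  qed
qed

lemma sigma_subadditive:
  assumes "0 < s" "0 < l" "s \<le> 1" "l \<le> 1" "0 \<le> a" "0 \<le> b" "t \<le> a + b"
  shows "sigma s l t \<le> sigma s l a + sigma s l b"
proof -
  have mono: "sigma s l t \<le> sigma s l (a + b)"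
    using assms strict_mono_less_eq[OF strict_mono_sigma[OF assms(1,2)]] by simp
  show ?thesis
  proof (cases "a = 0 \<or> b = 0")
    case True then show ?thesis using mono by auto
  next
    case False
    hence ab: "0 < a" "0 < b" using assms by auto
    have "sigma s l (a + b) = (a + b) * (sigma s l (a + b) / (a + b))"
      using ab by simp
    also have "\<dots> = a * (sigma s l (a + b) / (a + b)) + b * (sigma s l (a + b) / (a + b))"
      by (rule distrib_right)
    also have "\<dots> \<le> a * (sigma s l a / a) + b * (sigma s l b / b)"
      using ab assms by (intro add_mono mult_left_mono sigma_div_self_antimono) auto
    also have "\<dots> = sigma s l a + sigma s l b"
      using ab by simp
    finally show ?thesis using mono by linarith
  qed
qed

lemma sum_weighted_le_scaled:
  fixes f :: "real \<Rightarrow> real" and c t a b :: "nat \<Rightarrow> real"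
  assumes f_le: "\<And>t a b. 0 \<le> a \<Longrightarrow> 0 \<le> b \<Longrightarrow> t \<le> C * (a + b) \<Longrightarrow> f t \<le> K * (f a + f b)"
    and "\<And>k. k < n \<Longrightarrow> 0 \<le> c k" "\<And>k. k < n \<Longrightarrow> 0 \<le> a k" "\<And>k. k < n \<Longrightarrow> 0 \<le> b k"
    and "\<And>k. k < n \<Longrightarrow> t k \<le> C * (a k + b k)"
  shows "(\<Sum>k<n. c k * f (t k)) \<le> K * ((\<Sum>k<n. c k * f (a k)) + (\<Sum>k<n. c k * f (b k)))"
proof -
  have "(\<Sum>k<n. c k * f (t k)) \<le> (\<Sum>k<n. c k * (K * (f (a k) + f (b k))))"
    using assms by (intro sum_mono mult_left_mono f_le) auto
  also have "\<dots> = K * ((\<Sum>k<n. c k * f (a k)) + (\<Sum>k<n. c k * f (b k)))"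
    by (simp add: sum_distrib_left sum.distrib algebra_simps)
  finally show ?thesis .
qed

lemma sum_weighted_sigma_eq_0_imp:
  fixes c v :: "nat \<Rightarrow> real"
  assumes "0 < s" "0 < l" and sum_0: "(\<Sum>k<n. c k * sigma s l (v k)) = 0"
    and "\<And>k. k < n \<Longrightarrow> 0 \<le> c k" "\<And>k. k < n \<Longrightarrow> 0 \<le> v k" and "i < n" "0 < c i"
  shows "v i = 0"
proof -
  let ?f = "\<lambda>k. c k * sigma s l (v k)"
  have "0 \<le> ?f k" if "k \<in> {..<n}" for k
    using assms(4,5) that by (simp add: sigma_nonneg)
  then have "sum ?f {..<n} = 0 \<longleftrightarrow> (\<forall>k\<in>{..<n}. ?f k = 0)"
    by (rule sum_nonneg_eq_0_iff[OF finite_lessThan])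
  with sum_0 have "?f i = 0"
    using \<open>i < n\<close> by blast
  then show ?thesis
    using assms(1,2,7) sigma_eq_0_iff by simp
qed

lemma Iplus_nonneg: "Iplus D M \<Longrightarrow> i < D \<Longrightarrow> k < D \<Longrightarrow> 0 \<le> M i k"
  unfolding Iplus_def by auto

lemma Iplus_diag_pos: "Iplus D M \<Longrightarrow> i < D \<Longrightarrow> 0 < M i i"
  unfolding Iplus_def by (auto intro: add_pos_nonneg)

lemma Rn_subset: "Rn D \<subseteq> Rn (D + T)"
  unfolding Rn_def by auto

lemma Rn_eq_iff:
  assumes "x \<in> Rn D" "y \<in> Rn D"
  shows "x = y \<longleftrightarrow> (\<forall>i<D. x i = y i)"
proof (intro iffI ext)
  show "x i = y i" if "\<forall>i<D. x i = y i" for i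
    using that assms unfolding Rn_def by (cases "i < D") auto
qed simp

lemma quasi_metric_on_cong:
  "(\<And>x y. x \<in> X \<Longrightarrow> y \<in> X \<Longrightarrow> d x y = d' x y) \<Longrightarrow> quasi_metric_on X d \<longleftrightarrow> quasi_metric_on X d'"
  unfolding quasi_metric_on_def by simp

lemma metric_on_cong:
  "(\<And>x y. x \<in> X \<Longrightarrow> y \<in> X \<Longrightarrow> d x y = d' x y) \<Longrightarrow> metric_on X d \<longleftrightarrow> metric_on X d'"
  unfolding metric_on_def by simp

lemma pseudo_quasi_metric_on_cong:
  "(\<And>x y. x \<in> X \<Longrightarrow> y \<in> X \<Longrightarrow> d x y = d' x y) \<Longrightarrow> pseudo_quasi_metric_on X d \<longleftrightarrow> pseudo_quasi_metric_on X d'"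
  unfolding pseudo_quasi_metric_on_def by simp

lemma nn_layer_commute: "nn_layer D s l W x y j = nn_layer D s l W y x j"
  by (induction j) (auto simp: abs_minus_commute)

lemma nn_layer_eq_0: "\<forall>i<D. x i = y i \<Longrightarrow> nn_layer D s l W x y j i = 0"
  by (induction j arbitrary: i) auto

locale neural_net =
  fixes D J :: nat and s l :: "nat \<Rightarrow> real" and W :: "nat \<Rightarrow> nat \<Rightarrow> nat \<Rightarrow> real"
    and w :: "nat \<Rightarrow> real"
  assumes depth_pos: "1 \<le> J"
    and exponents_pos: "\<And>j. j \<le> J \<Longrightarrow> 0 < s j \<and> 0 < l j"
    and weights_Iplus: "\<And>j. 0 < j \<Longrightarrow> j < J \<Longrightarrow> Iplus D (W j)"
    and output_pos: "\<And>k. k < D \<Longrightarrow> 0 < w k"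
begin

abbreviation u :: "nat \<Rightarrow> (nat \<Rightarrow> real) \<Rightarrow> (nat \<Rightarrow> real) \<Rightarrow> nat \<Rightarrow> real" where
  "u j x y \<equiv> nn_layer D s l W x y j"

lemma weight_nonneg: "0 < j \<Longrightarrow> j < J \<Longrightarrow> i < D \<Longrightarrow> k < D \<Longrightarrow> 0 \<le> W j i k"
  using Iplus_nonneg weights_Iplus by blast

lemma weight_diag_pos: "0 < j \<Longrightarrow> j < J \<Longrightarrow> i < D \<Longrightarrow> 0 < W j i i"
  using Iplus_diag_pos weights_Iplus by blast

lemma output_nonneg: "k < D \<Longrightarrow> 0 \<le> w k"
  using output_pos less_imp_le by blast

lemma nn_layer_Suc:
  "i < D \<Longrightarrow> u (Suc j) x y i = (\<Sum>k<D. W (Suc j) i k * sigma (s (Suc j)) (l (Suc j)) (u j x y k))"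
  by simp

lemma nn_layer_nonneg: "j < J \<Longrightarrow> 0 \<le> u j x y i"
  by (induction j arbitrary: i)
    (auto intro!: sum_nonneg mult_nonneg_nonneg weight_nonneg sigma_nonneg)

lemma nn_layer_eq_0_imp:
  "j < J \<Longrightarrow> \<forall>i<D. u j x y i = 0 \<Longrightarrow> \<forall>i<D. x i = y i"
proof (induction j)
  case 0
  then show ?case
    using strict_mono_eq[OF strict_mono_sigma] exponents_pos[of 0] by auto
next
  case (Suc j)
  have "u j x y i = 0" if "i < D" for i
  proof (rule sum_weighted_sigma_eq_0_imp[where s = "s (Suc j)" and l = "l (Suc j)" and n = D
        and c = "W (Suc j) i"])
    show "(\<Sum>k<D. W (Suc j) i k * sigma (s (Suc j)) (l (Suc j)) (u j x y k)) = 0"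
      using Suc.prems that by simp
  qed (use Suc.prems that exponents_pos[of "Suc j"] in
      \<open>simp_all add: weight_nonneg weight_diag_pos nn_layer_nonneg\<close>)
  then show ?case using Suc by simp
qed

lemma nn_layer_Suc_le_scaled:
  assumes "Suc j < J"
    and u_le: "\<forall>i<D. u j x y i \<le> C * (u j x z i + u j z y i)"
    and sigma_le: "\<And>t a b. 0 \<le> a \<Longrightarrow> 0 \<le> b \<Longrightarrow> t \<le> C * (a + b) \<Longrightarrow>
       sigma (s (Suc j)) (l (Suc j)) t \<le> K * (sigma (s (Suc j)) (l (Suc j)) a + sigma (s (Suc j)) (l (Suc j)) b)"
  shows "\<forall>i<D. u (Suc j) x y i \<le> K * (u (Suc j) x z i + u (Suc j) z y i)"
proof (intro allI impI)
  fix i assume "i < D"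
  then show "u (Suc j) x y i \<le> K * (u (Suc j) x z i + u (Suc j) z y i)"
    unfolding nn_layer_Suc[OF \<open>i < D\<close>]
    using assms by (intro sum_weighted_le_scaled[where C = C] sigma_le weight_nonneg nn_layer_nonneg) auto
qed

lemma nn_layer_quasi_triangle:
  "j < J \<Longrightarrow> \<exists>C\<ge>1. \<forall>x y z. \<forall>i<D. u j x y i \<le> C * (u j x z i + u j z y i)"
proof (induction j)
  case 0
  show ?case by (intro exI[of _ 1]) auto
next
  case (Suc j)
  then obtain C where C: "1 \<le> C" "\<forall>x y z. \<forall>i<D. u j x y i \<le> C * (u j x z i + u j z y i)"
    by auto
  have sl: "0 < s (Suc j)" "0 < l (Suc j)"
    using exponents_pos Suc.prems by auto
  define K where "K = (2 * C) powr max (s (Suc j)) (l (Suc j))"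
  have "1 \<le> K"
    unfolding K_def using C sl by (intro ge_one_powr_ge_zero) auto
  moreover have "\<forall>i<D. u (Suc j) x y i \<le> K * (u (Suc j) x z i + u (Suc j) z y i)" for x y z
    unfolding K_def using Suc.prems C
    by (intro nn_layer_Suc_le_scaled sigma_quasi_subadditive sl) auto
  ultimately show ?case by blast
qed

lemma nn_layer_triangle:
  assumes "\<forall>j\<le>J. s j \<le> 1 \<and> l j \<le> 1"
  shows "j < J \<Longrightarrow> \<forall>i<D. u j x y i \<le> u j x z i + u j z y i"
proof (induction j)
  case 0
  show ?case by auto
next
  case (Suc j)
  have "0 < s (Suc j)" "0 < l (Suc j)" "s (Suc j) \<le> 1" "l (Suc j) \<le> 1"
    using exponents_pos assms Suc.prems by auto
  then have sigma_le: "sigma (s (Suc j)) (l (Suc j)) t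
      \<le> 1 * (sigma (s (Suc j)) (l (Suc j)) a + sigma (s (Suc j)) (l (Suc j)) b)"
    if "0 \<le> a" "0 \<le> b" "t \<le> 1 * (a + b)" for t a b
    using that sigma_subadditive by simp
  have u_le: "\<forall>i<D. u j x y i \<le> 1 * (u j x z i + u j z y i)"
    using Suc by simp
  show ?case
    using nn_layer_Suc_le_scaled[OF Suc.prems u_le sigma_le] by simp
qed

lemma neural_dist_nonneg: "0 \<le> neural_dist D J s l W w x y"
  unfolding neural_dist_def using depth_pos
  by (auto intro!: sum_nonneg mult_nonneg_nonneg sigma_nonneg nn_layer_nonneg output_nonneg)

lemma neural_dist_commute: "neural_dist D J s l W w x y = neural_dist D J s l W w y x"
  unfolding neural_dist_def by (simp add: nn_layer_commute[of D s l W x y])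

lemma neural_dist_eq_0_iff: "neural_dist D J s l W w x y = 0 \<longleftrightarrow> (\<forall>i<D. x i = y i)"
proof
  assume dist_0: "neural_dist D J s l W w x y = 0"
  have "u (J - 1) x y k = 0" if "k < D" for k
  proof (rule sum_weighted_sigma_eq_0_imp[where s = "s J" and l = "l J" and n = D and c = w])
    show "(\<Sum>k<D. w k * sigma (s J) (l J) (u (J - 1) x y k)) = 0"
      using dist_0 unfolding neural_dist_def .
  qed (use that exponents_pos[of J] depth_pos in
      \<open>simp_all add: output_nonneg output_pos nn_layer_nonneg\<close>)
  then show "\<forall>i<D. x i = y i"
    using nn_layer_eq_0_imp[of "J - 1" x y] depth_pos by simp
next
  assume "\<forall>i<D. x i = y i"
  then show "neural_dist D J s l W w x y = 0"
    by (simp add: neural_dist_def nn_layer_eq_0)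
qed

lemma neural_dist_quasi_triangle:
  "\<exists>C\<ge>1. \<forall>x y z. neural_dist D J s l W w x y
     \<le> C * (neural_dist D J s l W w x z + neural_dist D J s l W w z y)"
proof -
  obtain C where C: "1 \<le> C" "\<forall>x y z. \<forall>i<D. u (J - 1) x y i \<le> C * (u (J - 1) x z i + u (J - 1) z y i)"
    using nn_layer_quasi_triangle[of "J - 1"] depth_pos by auto
  define K where "K = (2 * C) powr max (s J) (l J)"
  have sl: "0 < s J" "0 < l J"
    using exponents_pos by auto
  have "1 \<le> K"
    unfolding K_def using C sl by (intro ge_one_powr_ge_zero) auto
  moreover have "neural_dist D J s l W w x y
      \<le> K * (neural_dist D J s l W w x z + neural_dist D J s l W w z y)" for x y z
    unfolding neural_dist_def K_def using C depth_pos
    by (intro sum_weighted_le_scaled[where C = C] sigma_quasi_subadditive sl)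
      (auto intro: output_nonneg nn_layer_nonneg)
  ultimately show ?thesis by blast
qed

lemma neural_dist_triangle:
  assumes "\<forall>j\<le>J. s j \<le> 1 \<and> l j \<le> 1"
  shows "neural_dist D J s l W w x y \<le> neural_dist D J s l W w x z + neural_dist D J s l W w z y"
proof -
  have "0 < s J" "0 < l J" "s J \<le> 1" "l J \<le> 1"
    using exponents_pos assms by auto
  then have sigma_le: "sigma (s J) (l J) t \<le> 1 * (sigma (s J) (l J) a + sigma (s J) (l J) b)"
    if "0 \<le> a" "0 \<le> b" "t \<le> 1 * (a + b)" for t a b
    using that sigma_subadditive by simp
  have "u (J - 1) x y k \<le> 1 * (u (J - 1) x z k + u (J - 1) z y k)" if "k < D" for k
    using nn_layer_triangle[OF assms] depth_pos that by simp
  then show ?thesis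
    unfolding neural_dist_def using depth_pos
    by (subst mult_1[symmetric], intro sum_weighted_le_scaled[where C = 1] sigma_le)
      (auto intro: output_nonneg nn_layer_nonneg)
qed

lemma neural_dist_nonneg_definite_commute:
  "x \<in> Rn D \<Longrightarrow> y \<in> Rn D \<Longrightarrow> 0 \<le> neural_dist D J s l W w x y
    \<and> (neural_dist D J s l W w x y = 0 \<longleftrightarrow> x = y)
    \<and> neural_dist D J s l W w x y = neural_dist D J s l W w y x"
  using neural_dist_nonneg neural_dist_commute by (simp add: neural_dist_eq_0_iff Rn_eq_iff)

lemma quasi_metric_on_neural_dist: "quasi_metric_on (Rn D) (neural_dist D J s l W w)"
  using neural_dist_nonneg_definite_commute neural_dist_quasi_triangle unfolding quasi_metric_on_def by blast

lemma metric_on_neural_dist: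
  assumes "\<forall>j\<le>J. s j \<le> 1 \<and> l j \<le> 1"
  shows "metric_on (Rn D) (neural_dist D J s l W w)"
  using neural_dist_nonneg_definite_commute neural_dist_triangle[OF assms] unfolding metric_on_def by blast

lemma pseudo_quasi_metric_on_neural_dist: "pseudo_quasi_metric_on X (neural_dist D J s l W w)"
proof -
  have "neural_dist D J s l W w x x = 0" for x
    by (simp add: neural_dist_eq_0_iff)
  then show ?thesis
    using neural_dist_nonneg neural_dist_commute neural_dist_quasi_triangle
    unfolding pseudo_quasi_metric_on_def by blast
qed

end

lemma neural_rep_neural_net: "neural_rep D T Dist J s l W w \<Longrightarrow> neural_net D J s l W w"
  unfolding neural_rep_def neural_net_def by auto

theorem mainTheorem5:
  fixes D T J :: nat
    and Dist :: "(nat \<Rightarrow> real) \<Rightarrow> (nat \<Rightarrow> real) \<Rightarrow> real"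
    and s l :: "nat \<Rightarrow> real" and W :: "nat \<Rightarrow> nat \<Rightarrow> nat \<Rightarrow> real" and w :: "nat \<Rightarrow> real"
  assumes "D \<ge> 1"
    and "neural_rep D T Dist J s l W w"
  shows "quasi_metric_on (Rn D) Dist
    \<and> (((\<forall>j. 0 < j \<and> j < J \<longrightarrow> orthogonal_mat D (W j)) \<and> (\<forall>j\<le>J. s j \<le> 1 \<and> l j \<le> 1))
         \<longrightarrow> metric_on (Rn D) Dist)
    \<and> (T \<ge> 1 \<longrightarrow> pseudo_quasi_metric_on (Rn (D + T)) Dist)"
proof -
  interpret neural_net D J s l W w
    using assms(2) by (rule neural_rep_neural_net)
  have Dist_eq: "Dist x y = neural_dist D J s l W w x y" if "x \<in> Rn (D + T)" "y \<in> Rn (D + T)" for x y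
    using assms(2) that unfolding neural_rep_def by blast
  then have Dist_eq_Rn_D: "Dist x y = neural_dist D J s l W w x y" if "x \<in> Rn D" "y \<in> Rn D" for x y
    using Rn_subset that by blast
  have "quasi_metric_on (Rn D) Dist \<longleftrightarrow> quasi_metric_on (Rn D) (neural_dist D J s l W w)"
    by (intro quasi_metric_on_cong Dist_eq_Rn_D)
  moreover have "metric_on (Rn D) Dist \<longleftrightarrow> metric_on (Rn D) (neural_dist D J s l W w)"
    by (intro metric_on_cong Dist_eq_Rn_D)
  moreover have "pseudo_quasi_metric_on (Rn (D + T)) Dist
      \<longleftrightarrow> pseudo_quasi_metric_on (Rn (D + T)) (neural_dist D J s l W w)"
    by (intro pseudo_quasi_metric_on_cong Dist_eq)
  ultimately show ?thesis
    using quasi_metric_on_neural_dist metric_on_neural_dist pseudo_quasi_metric_on_neural_dist by simp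
qed

end
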